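(* Let $n\ge 6$, $n-1\le m\le 2n-4$, and let $G$ be any connected simple graph with $n$ vertices and $m$ edges. Then $\mathbf{a}_4(G)\ge 0$.
   Context: $\mathbf{a}_4(G)$ is the coefficient of $\lambda^{n-4}$ in $\det(\lambda\mathbf{I}-\mathbf{A}(G))$, where $\mathbf{A}(G)$ is the adjacency matrix; equivalently, the number of 2-matchings of $G$ minus twice the number of 4-cycles of $G$. *)

theory Defs
  imports "Jordan_Normal_Form.Char_Poly"
begin

definition simple_graph :: "nat \<Rightarrow> nat set set \<Rightarrow> bool" where
  "simple_graph n E \<longleftrightarrow> (\<forall>e\<in>E. e \<subseteq> {0..<n} \<and> card e = 2)"

definition adjacent :: "nat set set \<Rightarrow> nat \<Rightarrow> nat \<Rightarrow> bool" where
  "adjacent E u v \<longleftrightarrow> {u, v} \<in> E"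

definition connected_graph :: "nat \<Rightarrow> nat set set \<Rightarrow> bool" where
  "connected_graph n E \<longleftrightarrow> (\<forall>u\<in>{0..<n}. \<forall>v\<in>{0..<n}. (adjacent E)\<^sup>*\<^sup>* u v)"

definition adjacency_matrix :: "nat \<Rightarrow> nat set set \<Rightarrow> int mat" where
  "adjacency_matrix n E = mat n n (\<lambda>(i, j). if adjacent E i j then 1 else 0)"

definition a4 :: "nat \<Rightarrow> nat set set \<Rightarrow> int" where
  "a4 n E = coeff (char_poly (adjacency_matrix n E)) (n - 4)"

end

theory Submission
  imports Defs
begin

text \<open>
  Since the adjacency matrix has zero diagonal, a4(G) is the sum of its principal 4 x 4 minors,
  and such a minor is the number of perfect matchings minus twice the number of 4-cycles of
  the induced subgraph: it is -3 on a K4, non-negative on every other 4-set, and 1 on two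
  disjoint edges one of whose ends is adjacent to neither end of the other.

  Induction on the number n of vertices shows a4(G) \<ge> -max(0, m - 2n + 4) (m - \<Delta>) for
  connected G with m edges and maximum degree \<Delta>. Let v have minimum degree d. If G - v is
  connected, the 4-sets through v contribute at least -(d - 2)(m - \<Delta>): for d = 1 the
  pendant 4-sets through v already give m - \<Delta>, and for d \<ge> 2 each K4 through v contains
  three edges inside N(v), each such edge lies in at most d - 2 of them, and N(v) spans at
  most m - \<Delta> edges. If moreover m - 2n + 4 < d - 2, then d \<le> 3 and the
  contribution is non-negative; for d = 3 a K4 on the closed neighbourhood of v is offset by
  three pendant 4-sets unless the graph is too dense. If v is a cut vertex, G is the union of
  two connected graphs sharing only v, and the 4-sets meeting both sides contribute at least
  m1 m2 - d1 d2. For m \<le> 2n - 4 the bound is 0.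
\<close>

section \<open>Coefficients of characteristic polynomials with zero diagonal\<close>

lemma prod_monom:
  "finite A \<Longrightarrow> (\<Prod>i\<in>A. monom (c i) (k i)) = monom (\<Prod>i\<in>A. c i) (\<Sum>i\<in>A. k i)"
  by (induct A rule: finite_induct) (auto simp: mult_monom)

lemma prod_char_poly_matrix_permutes:
  fixes A :: "'a :: comm_ring_1 mat"
  assumes A: "A \<in> carrier_mat n n" and diag: "\<And>i. i < n \<Longrightarrow> A $$ (i, i) = 0"
    and p: "p permutes {0..<n}"
  shows "(\<Prod>i = 0..<n. char_poly_matrix A $$ (i, p i))
    = monom (\<Prod>i | p i \<noteq> i. - A $$ (i, p i)) (n - card {i. p i \<noteq> i})"
proof -
  have moved: "{i. p i \<noteq> i} \<subseteq> {0..<n}"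
    using p permutes_not_in by fastforce
  have entry: "char_poly_matrix A $$ (i, p i) =
      monom (if p i = i then 1 else - A $$ (i, p i)) (if p i = i then 1 else 0)" if "i < n" for i
    using that A diag permutes_in_image[OF p]
    by (auto simp: char_poly_matrix_def monom_0 monom_Suc)
  have "(\<Prod>i = 0..<n. char_poly_matrix A $$ (i, p i))
      = monom (\<Prod>i = 0..<n. if p i = i then 1 else - A $$ (i, p i))
          (\<Sum>i = 0..<n. if p i = i then 1 else 0)"
    using entry by (simp add: prod_monom[symmetric])
  also have "(\<Prod>i = 0..<n. if p i = i then 1 else - A $$ (i, p i)) = (\<Prod>i | p i \<noteq> i. - A $$ (i, p i))"
    using moved by (intro prod.mono_neutral_cong_right) auto
  also have "(\<Sum>i = 0..<n. if p i = i then 1 else 0) = card ({0..<n} - {i. p i \<noteq> i})"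
    by (simp add: sum.If_cases set_diff_eq Int_def)
  also have "\<dots> = n - card {i. p i \<noteq> i}"
    using moved by (simp add: card_Diff_subset finite_subset)
  finally show ?thesis .
qed

lemma coeff_char_poly_zero_diagonal_permutes:
  fixes A :: "'a :: comm_ring_1 mat"
  assumes A: "A \<in> carrier_mat n n" and diag: "\<And>i. i < n \<Longrightarrow> A $$ (i, i) = 0" and "k \<le> n"
  shows "coeff (char_poly A) (n - k) = (-1) ^ k *
    (\<Sum>p | p permutes {0..<n} \<and> card {i. p i \<noteq> i} = k. signof p * (\<Prod>i | p i \<noteq> i. A $$ (i, p i)))"
proof -
  have coeff_term: "coeff (signof p * (\<Prod>i = 0..<n. char_poly_matrix A $$ (i, p i))) (n - k)
      = (if card {i. p i \<noteq> i} = k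
         then (-1) ^ k * (signof p * (\<Prod>i | p i \<noteq> i. A $$ (i, p i))) else 0)"
    if p: "p permutes {0..<n}" for p
  proof -
    have "card {i. p i \<noteq> i} \<le> n"
      using p permutes_not_in by (fastforce intro: card_mono[of "{0..<n}", simplified])
    then have "n - card {i. p i \<noteq> i} = n - k \<longleftrightarrow> card {i. p i \<noteq> i} = k"
      using \<open>k \<le> n\<close> by linarith
    moreover have "signof p * (\<Prod>i = 0..<n. char_poly_matrix A $$ (i, p i))
        = monom (signof p * (\<Prod>i | p i \<noteq> i. - A $$ (i, p i))) (n - card {i. p i \<noteq> i})"
      using prod_char_poly_matrix_permutes[OF A diag p] by (simp add: of_int_monom mult_monom)
    ultimately show ?thesis
      by (simp only: coeff_monom) (simp add: prod_uminus mult.left_commute)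
  qed
  have "coeff (char_poly A) (n - k) = (\<Sum>p | p permutes {0..<n}.
      coeff (signof p * (\<Prod>i = 0..<n. char_poly_matrix A $$ (i, p i))) (n - k))"
    unfolding char_poly_def det_def'[OF char_poly_matrix_closed[OF A]] coeff_sum ..
  also have "\<dots> = (\<Sum>p | p permutes {0..<n}. if card {i. p i \<noteq> i} = k
      then (-1) ^ k * (signof p * (\<Prod>i | p i \<noteq> i. A $$ (i, p i))) else 0)"
    using coeff_term by (intro sum.cong) auto
  also have "\<dots> = (\<Sum>p \<in> {p \<in> {p. p permutes {0..<n}}. card {i. p i \<noteq> i} = k}.
      (-1) ^ k * (signof p * (\<Prod>i | p i \<noteq> i. A $$ (i, p i))))"
    by (rule sum.inter_filter[symmetric]) (simp add: finite_permutations)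
  also have "\<dots> = (-1) ^ k *
    (\<Sum>p | p permutes {0..<n} \<and> card {i. p i \<noteq> i} = k. signof p * (\<Prod>i | p i \<noteq> i. A $$ (i, p i)))"
    by (simp add: sum_distrib_left)
  finally show ?thesis .
qed

definition principal_minor :: "('b \<Rightarrow> 'b \<Rightarrow> 'a :: comm_ring_1) \<Rightarrow> 'b set \<Rightarrow> 'a" where
  "principal_minor w S = (\<Sum>p | p permutes S. of_int (sign p) * (\<Prod>i\<in>S. w i (p i)))"

lemma principal_minor_cong:
  assumes "\<And>i j. i \<in> S \<Longrightarrow> j \<in> S \<Longrightarrow> w i j = w' i j"
  shows "principal_minor w S = principal_minor w' S"
  unfolding principal_minor_def
proof (intro sum.cong refl)
  fix p assume "p \<in> {p. p permutes S}"
  then have "(\<Prod>i\<in>S. w i (p i)) = (\<Prod>i\<in>S. w' i (p i))"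
    using assms by (intro prod.cong) (auto simp: permutes_in_image)
  then show "of_int (sign p) * (\<Prod>i\<in>S. w i (p i)) = of_int (sign p) * (\<Prod>i\<in>S. w' i (p i))"
    by simp
qed

lemma principal_minor_eq_sum_derangements:
  assumes S: "finite S" and diag: "\<And>i. i \<in> S \<Longrightarrow> w i i = 0"
  shows "principal_minor w S =
    (\<Sum>p | p permutes S \<and> {i. p i \<noteq> i} = S. of_int (sign p) * (\<Prod>i | p i \<noteq> i. w i (p i)))"
  unfolding principal_minor_def
proof (rule sum.mono_neutral_cong_right)
  show "finite {p. p permutes S}" using finite_permutations[OF S] .
  show "\<forall>p\<in>{p. p permutes S} - {p. p permutes S \<and> {i. p i \<noteq> i} = S}.
      of_int (sign p) * (\<Prod>i\<in>S. w i (p i)) = 0"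
  proof
    fix p assume p: "p \<in> {p. p permutes S} - {p. p permutes S \<and> {i. p i \<noteq> i} = S}"
    then have "{i. p i \<noteq> i} \<subseteq> S" "{i. p i \<noteq> i} \<noteq> S"
      using permutes_not_in by fastforce+
    then obtain i where "i \<in> S" "p i = i" by blast
    then have "(\<Prod>i\<in>S. w i (p i)) = 0"
      using S diag by (intro prod_zero bexI[of _ i]) auto
    then show "of_int (sign p) * (\<Prod>i\<in>S. w i (p i)) = 0"
      by simp
  qed
  show "of_int (sign p) * (\<Prod>i\<in>S. w i (p i)) = of_int (sign p) * (\<Prod>i | p i \<noteq> i. w i (p i))"
    if "p \<in> {p. p permutes S \<and> {i. p i \<noteq> i} = S}" for p
    using that by simp
qed auto

lemma sum_permutes_by_support:
  fixes w :: "'b \<Rightarrow> 'b \<Rightarrow> 'a :: comm_ring_1"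
  assumes V: "finite V" and diag: "\<And>i. i \<in> V \<Longrightarrow> w i i = 0"
  shows "(\<Sum>p | p permutes V \<and> card {i. p i \<noteq> i} = k. of_int (sign p) * (\<Prod>i | p i \<noteq> i. w i (p i)))
    = (\<Sum>S | S \<subseteq> V \<and> card S = k. principal_minor w S)"
proof -
  let ?P = "{p. p permutes V \<and> card {i. p i \<noteq> i} = k}"
  let ?T = "{S. S \<subseteq> V \<and> card S = k}"
  have support: "{p \<in> ?P. {i. p i \<noteq> i} = S} = {p. p permutes S \<and> {i. p i \<noteq> i} = S}"
    if "S \<in> ?T" for S
  proof (intro Collect_cong)
    fix p
    show "p \<in> ?P \<and> {i. p i \<noteq> i} = S \<longleftrightarrow> p permutes S \<and> {i. p i \<noteq> i} = S"
      using that permutes_subset[of p S V] permutes_superset[of p V S] by auto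
  qed
  have "finite ?P"
    by (rule rev_finite_subset[OF finite_permutations[OF V]]) auto
  moreover have "(\<lambda>p. {i. p i \<noteq> i}) ` ?P \<subseteq> ?T"
    using permutes_not_in by fastforce
  ultimately have "(\<Sum>p\<in>?P. of_int (sign p) * (\<Prod>i | p i \<noteq> i. w i (p i)))
      = (\<Sum>S\<in>?T. \<Sum>p | p \<in> ?P \<and> {i. p i \<noteq> i} = S. of_int (sign p) * (\<Prod>i | p i \<noteq> i. w i (p i)))"
    using V by (intro sum.group[symmetric]) auto
  also have "\<dots> = (\<Sum>S\<in>?T. principal_minor w S)"
  proof (rule sum.cong[OF refl])
    fix S assume S: "S \<in> ?T"
    then have "finite S" "\<And>i. i \<in> S \<Longrightarrow> w i i = 0"
      using V diag finite_subset by auto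
    then show "(\<Sum>p | p \<in> ?P \<and> {i. p i \<noteq> i} = S. of_int (sign p) * (\<Prod>i | p i \<noteq> i. w i (p i)))
        = principal_minor w S"
      unfolding support[OF S] by (simp add: principal_minor_eq_sum_derangements)
  qed
  finally show ?thesis .
qed

lemma coeff_char_poly_zero_diagonal:
  fixes A :: "'a :: comm_ring_1 mat"
  assumes "A \<in> carrier_mat n n" and diag: "\<And>i. i < n \<Longrightarrow> A $$ (i, i) = 0" and "k \<le> n"
  shows "coeff (char_poly A) (n - k) =
    (-1) ^ k * (\<Sum>S | S \<subseteq> {0..<n} \<and> card S = k. principal_minor (\<lambda>i j. A $$ (i, j)) S)"
  using coeff_char_poly_zero_diagonal_permutes[OF assms] diag
    sum_permutes_by_support[of "{0..<n}" "\<lambda>i j. A $$ (i, j)" k]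
  by simp

section \<open>Principal 4-minors of adjacency matrices\<close>

definition adj_ind :: "nat set set \<Rightarrow> nat \<Rightarrow> nat \<Rightarrow> int" where
  "adj_ind E i j = (if {i, j} \<in> E then 1 else 0)"

definition quad_minor_sum :: "nat set \<Rightarrow> nat set set \<Rightarrow> int" where
  "quad_minor_sum V E = (\<Sum>S | S \<subseteq> V \<and> card S = 4. principal_minor (adj_ind E) S)"

lemma a4_eq_quad_minor_sum:
  assumes "simple_graph n E" and "4 \<le> n"
  shows "a4 n E = quad_minor_sum {0..<n} E"
proof -
  define A where "A = adjacency_matrix n E"
  have A: "A \<in> carrier_mat n n"
    and entry: "\<And>i j. i < n \<Longrightarrow> j < n \<Longrightarrow> A $$ (i, j) = adj_ind E i j"
    unfolding A_def adjacency_matrix_def adj_ind_def adjacent_def by auto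
  have loopless: "adj_ind E i i = 0" for i
    using assms(1) unfolding simple_graph_def adj_ind_def by force
  have "a4 n E = (\<Sum>S | S \<subseteq> {0..<n} \<and> card S = 4. principal_minor (\<lambda>i j. A $$ (i, j)) S)"
    unfolding a4_def A_def[symmetric]
    using coeff_char_poly_zero_diagonal[OF A _ assms(2)] entry loopless by simp
  also have "\<dots> = quad_minor_sum {0..<n} E"
    unfolding quad_minor_sum_def
    by (intro sum.cong refl principal_minor_cong) (auto intro!: entry)
  finally show ?thesis .
qed

lemma adj_ind_commute: "adj_ind E i j = adj_ind E j i"
  by (simp add: adj_ind_def insert_commute)

lemma adj_ind_idem: "adj_ind E i j * adj_ind E i j = adj_ind E i j"
  "adj_ind E i j * (adj_ind E i j * z) = adj_ind E i j * z"
  by (auto simp: adj_ind_def)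

lemma principal_minor_adj_ind_4:
  assumes dist: "a \<noteq> b" "a \<noteq> c" "a \<noteq> d" "b \<noteq> c" "b \<noteq> d" "c \<noteq> d"
    and loopless: "\<And>i. {i} \<notin> E"
  shows "principal_minor (adj_ind E) {a, b, c, d} =
      adj_ind E a b * adj_ind E c d + adj_ind E a c * adj_ind E b d + adj_ind E a d * adj_ind E b c
    - 2 * (adj_ind E a b * adj_ind E b c * adj_ind E c d * adj_ind E a d
         + adj_ind E a b * adj_ind E b d * adj_ind E c d * adj_ind E a c
         + adj_ind E a c * adj_ind E b c * adj_ind E b d * adj_ind E a d)"
proof -
  have diag: "adj_ind E i i = 0" for i
    using loopless by (simp add: adj_ind_def)
  have "principal_minor (adj_ind E) {a, b, c, d} = (\<Sum>p | p permutes {a, b, c, d}. of_int (sign p) *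
      (adj_ind E a (p a) * adj_ind E b (p b) * adj_ind E c (p c) * adj_ind E d (p d)))"
    unfolding principal_minor_def using dist by (intro sum.cong) (auto simp: mult.assoc)
  also have "\<dots> =
      adj_ind E a b * adj_ind E c d + adj_ind E a c * adj_ind E b d + adj_ind E a d * adj_ind E b c
    - 2 * (adj_ind E a b * adj_ind E b c * adj_ind E c d * adj_ind E a d
         + adj_ind E a b * adj_ind E b d * adj_ind E c d * adj_ind E a c
         + adj_ind E a c * adj_ind E b c * adj_ind E b d * adj_ind E a d)"
    using dist
    apply (simp add: sum_over_permutations_insert sign_compose permutation_compose
        sign_swap_id transpose_apply_other diag permutation_swap_id)
    apply (simp add: adj_ind_commute algebra_simps adj_ind_idem)
    done
  finally show ?thesis .
qed

definition clique :: "nat set set \<Rightarrow> nat set \<Rightarrow> bool" where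
  "clique E S \<longleftrightarrow> (\<forall>i\<in>S. \<forall>j\<in>S. i \<noteq> j \<longrightarrow> {i, j} \<in> E)"

lemma card_4_obtain:
  assumes "card S = 4"
  obtains a b c d where "S = {a, b, c, d}"
    "a \<noteq> b" "a \<noteq> c" "a \<noteq> d" "b \<noteq> c" "b \<noteq> d" "c \<noteq> d"
proof -
  obtain a S' where "S = insert a S'" "a \<notin> S'" "card S' = 3"
    using assms card_Suc_eq[of S 3] by auto
  then show ?thesis
    using that by (auto simp: card_3_iff)
qed

lemma principal_minor_4_bounds:
  assumes "card S = 4" and "\<And>i. {i} \<notin> E"
  shows "-3 \<le> principal_minor (adj_ind E) S"
    and "\<not> clique E S \<Longrightarrow> 0 \<le> principal_minor (adj_ind E) S"
proof -
  obtain a b c d where S: "S = {a, b, c, d}"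
    and dist: "a \<noteq> b" "a \<noteq> c" "a \<noteq> d" "b \<noteq> c" "b \<noteq> d" "c \<noteq> d"
    using card_4_obtain[OF assms(1)] by metis
  have clique: "clique E {a, b, c, d} \<longleftrightarrow>
      {a, b} \<in> E \<and> {a, c} \<in> E \<and> {a, d} \<in> E \<and> {b, c} \<in> E \<and> {b, d} \<in> E \<and> {c, d} \<in> E"
    unfolding clique_def using dist by (auto simp: insert_commute)
  show "-3 \<le> principal_minor (adj_ind E) S"
    unfolding S principal_minor_adj_ind_4[OF dist assms(2)] by (simp add: adj_ind_def)
  show "\<not> clique E S \<Longrightarrow> 0 \<le> principal_minor (adj_ind E) S"
    unfolding S principal_minor_adj_ind_4[OF dist assms(2)] clique by (auto simp: adj_ind_def)
qed

section \<open>Graphs and degrees\<close>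

definition graph_on :: "nat set \<Rightarrow> nat set set \<Rightarrow> bool" where
  "graph_on V E \<longleftrightarrow> finite V \<and> (\<forall>e\<in>E. e \<subseteq> V \<and> card e = 2)"

lemma graph_on_loopless: "graph_on V E \<Longrightarrow> {i} \<notin> E"
  unfolding graph_on_def by force

lemma graph_on_finite_edges: "graph_on V E \<Longrightarrow> finite E"
  unfolding graph_on_def by (meson Pow_iff finite_Pow_iff finite_subset subsetI)

lemma graph_on_edgeE:
  assumes "graph_on V E" "e \<in> E" "p \<in> e"
  obtains q where "e = {p, q}" "p \<noteq> q" "q \<in> V" "p \<in> V"
  using assms unfolding graph_on_def by (auto simp: card_2_iff doubleton_eq_iff)

lemma principal_minor_pendant:
  assumes G: "graph_on V E" and e: "e \<in> E" and f: "f \<in> E" and disj: "e \<inter> f = {}"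
    and p: "p \<in> e" and no_edge: "\<And>y. y \<in> f \<Longrightarrow> {p, y} \<notin> E"
  shows "principal_minor (adj_ind E) (e \<union> f) = 1"
proof -
  obtain q where q: "e = {p, q}" "p \<noteq> q"
    using graph_on_edgeE[OF G e p] by metis
  obtain y z where yz: "f = {y, z}" "y \<noteq> z"
    using G f unfolding graph_on_def by (auto simp: card_2_iff)
  have "principal_minor (adj_ind E) {p, q, y, z} = 1"
    using q yz disj e f no_edge graph_on_loopless[OF G]
    by (subst principal_minor_adj_ind_4) (auto simp: adj_ind_def)
  moreover have "e \<union> f = {p, q, y, z}"
    using q yz by auto
  ultimately show ?thesis by simp
qed

definition nbhd :: "nat set set \<Rightarrow> nat \<Rightarrow> nat set" where
  "nbhd E v = {u. {v, u} \<in> E}"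

definition deg :: "nat set set \<Rightarrow> nat \<Rightarrow> nat" where
  "deg E v = card {e\<in>E. v \<in> e}"

definition max_deg :: "nat set \<Rightarrow> nat set set \<Rightarrow> nat" where
  "max_deg V E = Max (insert 0 (deg E ` V))"

definition delete_vertex :: "nat set set \<Rightarrow> nat \<Rightarrow> nat set set" where
  "delete_vertex E v = {e\<in>E. v \<notin> e}"

lemma nbhd_subset: "graph_on V E \<Longrightarrow> nbhd E v \<subseteq> V"
  unfolding graph_on_def nbhd_def by auto

lemma not_in_nbhd: "graph_on V E \<Longrightarrow> v \<notin> nbhd E v"
  using graph_on_loopless unfolding nbhd_def by auto

lemma deg_eq_card_nbhd:
  assumes G: "graph_on V E"
  shows "deg E v = card (nbhd E v)"
proof -
  have "{e\<in>E. v \<in> e} = (\<lambda>u. {v, u}) ` nbhd E v"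
  proof (intro equalityI subsetI)
    fix e assume "e \<in> {e\<in>E. v \<in> e}"
    then obtain q where "e = {v, q}" "e \<in> E"
      using graph_on_edgeE[OF G] by (metis (no_types, lifting) mem_Collect_eq)
    then show "e \<in> (\<lambda>u. {v, u}) ` nbhd E v"
      unfolding nbhd_def by auto
  qed (auto simp: nbhd_def)
  moreover have "inj_on (\<lambda>u. {v, u}) (nbhd E v)"
    by (auto simp: inj_on_def doubleton_eq_iff)
  ultimately show ?thesis
    unfolding deg_def by (simp add: card_image)
qed

lemma deg_le_card: "finite E \<Longrightarrow> deg E u \<le> card E"
  unfolding deg_def by (rule card_mono) auto

lemma deg_outside:
  assumes "graph_on V E" "u \<notin> V"
  shows "deg E u = 0"
proof -
  have no_edges: "{e\<in>E. u \<in> e} = {}"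
    using assms unfolding graph_on_def by auto
  show ?thesis
    unfolding deg_def no_edges by simp
qed

lemma card_delete_vertex: "finite E \<Longrightarrow> card (delete_vertex E v) = card E - deg E v"
proof -
  assume "finite E"
  moreover have "delete_vertex E v = E - {e\<in>E. v \<in> e}"
    unfolding delete_vertex_def by auto
  ultimately show ?thesis
    unfolding deg_def by (simp add: card_Diff_subset)
qed

lemma graph_on_delete_vertex: "graph_on V E \<Longrightarrow> graph_on (V - {v}) (delete_vertex E v)"
  unfolding graph_on_def delete_vertex_def by auto

lemma deg_delete_vertex:
  assumes G: "graph_on V E" and "u \<noteq> v"
  shows "deg E u \<le> deg (delete_vertex E v) u + 1"
proof -
  have "{e\<in>E. u \<in> e} \<subseteq> insert {u, v} {e\<in>delete_vertex E v. u \<in> e}"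
  proof
    fix e assume e: "e \<in> {e\<in>E. u \<in> e}"
    then obtain q where "e = {u, q}" "u \<noteq> q"
      using graph_on_edgeE[OF G] by blast
    then show "e \<in> insert {u, v} {e\<in>delete_vertex E v. u \<in> e}"
      using e \<open>u \<noteq> v\<close> by (cases "q = v") (auto simp: delete_vertex_def)
  qed
  then have "deg E u \<le> card (insert {u, v} {e\<in>delete_vertex E v. u \<in> e})"
    unfolding deg_def using graph_on_finite_edges[OF G]
    by (intro card_mono) (auto simp: delete_vertex_def)
  also have "\<dots> \<le> deg (delete_vertex E v) u + 1"
    unfolding deg_def by (simp add: card_insert_le_m1 card_insert_if)
  finally show ?thesis .
qed

lemma max_deg_ge: "finite V \<Longrightarrow> u \<in> V \<Longrightarrow> deg E u \<le> max_deg V E"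
  unfolding max_deg_def by (simp add: Max_ge_iff)

lemma max_deg_le_card: "graph_on V E \<Longrightarrow> max_deg V E \<le> card E"
  unfolding max_deg_def using deg_le_card[OF graph_on_finite_edges]
  by (auto simp: Max_le_iff graph_on_def)

lemma max_deg_attained:
  assumes "finite V" "V \<noteq> {}"
  obtains u where "u \<in> V" "deg E u = max_deg V E"
proof -
  have "max_deg V E \<in> insert 0 (deg E ` V)"
    unfolding max_deg_def using assms by (intro Max_in) auto
  moreover obtain w where "w \<in> V" using assms by auto
  ultimately show thesis
    using that max_deg_ge[OF assms(1) \<open>w \<in> V\<close>, of E] by fastforce
qed

lemma max_deg_delete_vertex:
  assumes G: "graph_on V E" and v: "v \<in> V" and "1 \<le> deg E v"
  shows "max_deg V E \<le> max_deg (V - {v}) (delete_vertex E v) + deg E v"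
proof -
  have V: "finite V" using G unfolding graph_on_def by simp
  obtain u where u: "u \<in> V" "deg E u = max_deg V E"
    using max_deg_attained[OF V] v by blast
  show ?thesis
  proof (cases "u = v")
    case False
    then have "deg E u \<le> deg (delete_vertex E v) u + 1"
      by (rule deg_delete_vertex[OF G])
    also have "deg (delete_vertex E v) u \<le> max_deg (V - {v}) (delete_vertex E v)"
      using V u False by (intro max_deg_ge) auto
    finally show ?thesis using u \<open>1 \<le> deg E v\<close> by simp
  qed (use u in simp)
qed

lemma card_filter_eq_sum: "finite A \<Longrightarrow> card {x\<in>A. P x} = (\<Sum>x\<in>A. if P x then 1 else 0)"
  by (simp add: sum.inter_filter[symmetric])

lemma sum_card_filter_swap:
  assumes "finite A" "finite B"
  shows "(\<Sum>a\<in>A. card {b\<in>B. P a b}) = (\<Sum>b\<in>B. card {a\<in>A. P a b})"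
  using assms by (simp add: card_filter_eq_sum sum.swap[of _ A])

lemma int_card_le_sum:
  fixes f :: "'a \<Rightarrow> int"
  assumes "finite B" "A \<subseteq> B" "\<And>x. x \<in> A \<Longrightarrow> f x = 1" "\<And>x. x \<in> B - A \<Longrightarrow> 0 \<le> f x"
  shows "int (card A) \<le> sum f B"
proof -
  have "sum f B = sum f A + sum f (B - A)"
    using assms(1,2) by (metis add.commute sum.subset_diff)
  moreover have "sum f A = int (card A)"
    using assms(3) by simp
  moreover have "0 \<le> sum f (B - A)"
    using assms(4) by (intro sum_nonneg) auto
  ultimately show ?thesis by linarith
qed

lemma handshake:
  assumes G: "graph_on V E"
  shows "(\<Sum>u\<in>V. deg E u) = 2 * card E"
proof -
  have "(\<Sum>u\<in>V. deg E u) = (\<Sum>e\<in>E. card {u\<in>V. u \<in> e})"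
    unfolding deg_def using G graph_on_finite_edges[OF G]
    by (intro sum_card_filter_swap) (auto simp: graph_on_def)
  also have "\<dots> = (\<Sum>e\<in>E. 2)"
  proof (rule sum.cong[OF refl])
    fix e assume "e \<in> E"
    then have "{u\<in>V. u \<in> e} = e" "card e = 2"
      using G unfolding graph_on_def by auto
    then show "card {u\<in>V. u \<in> e} = 2" by simp
  qed
  finally show ?thesis by simp
qed

section \<open>The 4-sets through a vertex\<close>

definition quad_minor_sum_at :: "nat set \<Rightarrow> nat set set \<Rightarrow> nat \<Rightarrow> int" where
  "quad_minor_sum_at V E v = (\<Sum>S | S \<subseteq> V \<and> card S = 4 \<and> v \<in> S. principal_minor (adj_ind E) S)"

lemma quad_minor_sum_delete_vertex:
  assumes G: "graph_on V E"
  shows "quad_minor_sum V E =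
    quad_minor_sum (V - {v}) (delete_vertex E v) + quad_minor_sum_at V E v"
proof -
  have V: "finite V" using G unfolding graph_on_def by simp
  have split: "{S. S \<subseteq> V \<and> card S = 4} =
      {S. S \<subseteq> V - {v} \<and> card S = 4} \<union> {S. S \<subseteq> V \<and> card S = 4 \<and> v \<in> S}"
    by auto
  have "(\<Sum>S | S \<subseteq> V - {v} \<and> card S = 4. principal_minor (adj_ind E) S)
      = quad_minor_sum (V - {v}) (delete_vertex E v)"
    unfolding quad_minor_sum_def
    by (intro sum.cong refl principal_minor_cong) (auto simp: adj_ind_def delete_vertex_def)
  then show ?thesis
    unfolding quad_minor_sum_def quad_minor_sum_at_def split using V
    by (subst sum.union_disjoint) auto
qed

definition k4s_at :: "nat set \<Rightarrow> nat set set \<Rightarrow> nat \<Rightarrow> nat set set" where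
  "k4s_at V E v = {S. S \<subseteq> V \<and> card S = 4 \<and> v \<in> S \<and> clique E S}"

lemma k4s_at_subset_nbhd: "S \<in> k4s_at V E v \<Longrightarrow> S - {v} \<subseteq> nbhd E v"
  unfolding k4s_at_def clique_def nbhd_def by auto

text \<open>Swapping the endpoint u of an edge inside the neighbourhood of v for v itself
  injects these edges into the edges avoiding u.\<close>

lemma card_edges_in_nbhd_le:
  assumes G: "graph_on V E"
  shows "card {e\<in>E. e \<subseteq> nbhd E v} \<le> card E - deg E u"
proof -
  define f where "f e = (if u \<in> e then insert v (e - {u}) else e)" for e
  define g where "g e = (if v \<in> e then insert u (e - {v}) else e)" for e
  have v_notin: "v \<notin> e" if "e \<subseteq> nbhd E v" for e
    using not_in_nbhd[OF G] that by auto
  have maps: "f e \<in> delete_vertex E u" if e: "e \<in> E" "e \<subseteq> nbhd E v" for e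
  proof (cases "u \<in> e")
    case True
    then obtain y where y: "e = {u, y}" "u \<noteq> y"
      using graph_on_edgeE[OF G e(1)] by blast
    then have "{v, y} \<in> E" "u \<noteq> v"
      using e v_notin[OF e(2)] True unfolding nbhd_def by auto
    then show ?thesis
      using y unfolding f_def delete_vertex_def by (auto simp: insert_Diff_if)
  qed (use e in \<open>auto simp: f_def delete_vertex_def\<close>)
  have "g (f e) = e" if "e \<subseteq> nbhd E v" for e
    using v_notin[OF that] unfolding f_def g_def by auto
  then have "inj_on f {e\<in>E. e \<subseteq> nbhd E v}"
    by (intro inj_on_inverseI[where g = g]) auto
  then have "card {e\<in>E. e \<subseteq> nbhd E v} \<le> card (delete_vertex E u)"
    using maps graph_on_finite_edges[OF G]
    by (intro card_inj_on_le) (auto simp: delete_vertex_def)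
  then show ?thesis
    using card_delete_vertex[OF graph_on_finite_edges[OF G]] by simp
qed

lemma three_le_card_nbhd_edges_in_k4:
  assumes S: "S \<in> k4s_at V E v"
  shows "3 \<le> card {e\<in>E. e \<subseteq> nbhd E v \<and> e \<subseteq> S}"
proof -
  have "card (S - {v}) = 3"
    using S unfolding k4s_at_def by simp
  then obtain a b c where abc: "S - {v} = {a, b, c}" "a \<noteq> b" "b \<noteq> c" "a \<noteq> c"
    by (auto simp: card_3_iff)
  have "{{a, b}, {a, c}, {b, c}} \<subseteq> {e\<in>E. e \<subseteq> nbhd E v \<and> e \<subseteq> S}"
    using S abc k4s_at_subset_nbhd[OF S] unfolding k4s_at_def clique_def by auto
  moreover have "card {{a, b}, {a, c}, {b, c}} = 3"
    using abc by (auto simp: doubleton_eq_iff)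
  moreover have "finite {e\<in>E. e \<subseteq> nbhd E v \<and> e \<subseteq> S}"
    using S unfolding k4s_at_def by (auto intro: finite_subset[of _ "Pow S"] simp: card_ge_0_finite)
  ultimately show ?thesis
    by (metis card_mono)
qed

lemma card_k4s_at_containing_edge_le:
  assumes G: "graph_on V E" and e: "e \<in> E" "e \<subseteq> nbhd E v"
  shows "card {S\<in>k4s_at V E v. e \<subseteq> S} \<le> card (nbhd E v) - 2"
proof -
  have N: "finite (nbhd E v)"
    by (rule finite_subset[OF nbhd_subset[OF G]]) (use G in \<open>simp add: graph_on_def\<close>)
  have "v \<notin> e" "card e = 2"
    using e not_in_nbhd[OF G, of v] G unfolding graph_on_def by auto
  then have ve: "card (insert v e) = 3"
    by (subst card_insert_disjoint) (auto intro: card_ge_0_finite)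
  have "{S\<in>k4s_at V E v. e \<subseteq> S} \<subseteq> (\<lambda>z. insert z (insert v e)) ` (nbhd E v - e)"
  proof
    fix S assume S: "S \<in> {S\<in>k4s_at V E v. e \<subseteq> S}"
    then have S4: "card S = 4" "insert v e \<subseteq> S"
      unfolding k4s_at_def by auto
    moreover have "finite S"
      using S4(1) by (simp add: card_ge_0_finite)
    ultimately have "card (S - insert v e) = 1"
      using card_Diff_subset[OF finite_subset[OF S4(2)] S4(2)] ve by simp
    then obtain z where z: "S - insert v e = {z}"
      by (auto simp: card_1_singleton_iff)
    then have "z \<in> nbhd E v - e"
      using k4s_at_subset_nbhd[of S V E v] S by auto
    then show "S \<in> (\<lambda>z. insert z (insert v e)) ` (nbhd E v - e)"
      using z S4 by blast
  qed
  then have "card {S\<in>k4s_at V E v. e \<subseteq> S} \<le> card ((\<lambda>z. insert z (insert v e)) ` (nbhd E v - e))"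
    using N by (intro card_mono) auto
  also have "\<dots> \<le> card (nbhd E v - e)"
    by (rule card_image_le) (use N in simp)
  also have "\<dots> = card (nbhd E v) - 2"
    using e G N unfolding graph_on_def by (simp add: card_Diff_subset finite_subset)
  finally show ?thesis .
qed

lemma card_k4s_at_le:
  assumes G: "graph_on V E"
  shows "3 * card (k4s_at V E v) \<le> (card (nbhd E v) - 2) * card {e\<in>E. e \<subseteq> nbhd E v}"
proof -
  let ?C = "k4s_at V E v" and ?N = "{e\<in>E. e \<subseteq> nbhd E v}"
  have "finite ?C"
    using G unfolding graph_on_def k4s_at_def by auto
  moreover have "finite ?N"
    using graph_on_finite_edges[OF G] by simp
  ultimately have "(\<Sum>S\<in>?C. card {e\<in>?N. e \<subseteq> S}) = (\<Sum>e\<in>?N. card {S\<in>?C. e \<subseteq> S})"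
    by (rule sum_card_filter_swap)
  moreover have "(\<Sum>S\<in>?C. 3) \<le> (\<Sum>S\<in>?C. card {e\<in>?N. e \<subseteq> S})"
    using three_le_card_nbhd_edges_in_k4 by (intro sum_mono) (simp add: conj_assoc)
  moreover have "(\<Sum>e\<in>?N. card {S\<in>?C. e \<subseteq> S}) \<le> (\<Sum>e\<in>?N. card (nbhd E v) - 2)"
    using card_k4s_at_containing_edge_le[OF G] by (intro sum_mono) simp
  ultimately show ?thesis
    by (simp add: mult.commute)
qed

lemma card_Un_disjoint_edges:
  assumes G: "graph_on V E" and "e \<in> E" "f \<in> E" "e \<inter> f = {}"
  shows "card (e \<union> f) = 4" and "e \<union> f \<subseteq> V"
proof -
  have "card e = 2" "card f = 2" "e \<subseteq> V" "f \<subseteq> V"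
    using G assms(2,3) unfolding graph_on_def by auto
  then show "card (e \<union> f) = 4" "e \<union> f \<subseteq> V"
    using assms(4) by (auto simp: card_Un_disjoint card_ge_0_finite)
qed

lemma quad_minor_sum_at_ge_pendants:
  assumes G: "graph_on V E" and A: "A \<subseteq> {S. S \<subseteq> V \<and> card S = 4 \<and> v \<in> S}"
    and one: "\<And>S. S \<in> A \<Longrightarrow> principal_minor (adj_ind E) S = 1"
  shows "int (card A) - 3 * int (card (k4s_at V E v)) \<le> quad_minor_sum_at V E v"
proof -
  let ?Q = "{S. S \<subseteq> V \<and> card S = 4 \<and> v \<in> S}"
  let ?pm = "principal_minor (adj_ind E)"
  have Q: "finite ?Q"
    using G unfolding graph_on_def by simp
  have "quad_minor_sum_at V E v = sum ?pm (?Q - A) + sum ?pm A"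
    unfolding quad_minor_sum_at_def using sum.subset_diff[OF A Q] by simp
  moreover have "sum ?pm A = int (card A)"
    using one by simp
  moreover have "(\<Sum>S\<in>?Q - A. if clique E S then -3 else 0) \<le> sum ?pm (?Q - A)"
    using principal_minor_4_bounds graph_on_loopless[OF G] by (intro sum_mono) auto
  moreover have "(\<Sum>S\<in>?Q - A. if clique E S then -3 else 0)
      = -3 * int (card {S\<in>?Q - A. clique E S})"
    using Q by (simp add: sum.If_cases Int_def)
  moreover have "card {S\<in>?Q - A. clique E S} \<le> card (k4s_at V E v)"
    unfolding k4s_at_def by (intro card_mono rev_finite_subset[OF Q]) auto
  ultimately show ?thesis by linarith
qed

lemma three_le_card_nbhd_if_k4:
  assumes G: "graph_on V E" and S: "S \<in> k4s_at V E v"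
  shows "3 \<le> card (nbhd E v)"
proof -
  have "finite (nbhd E v)"
    by (rule finite_subset[OF nbhd_subset[OF G]]) (use G in \<open>simp add: graph_on_def\<close>)
  moreover have "card (S - {v}) = 3"
    using S unfolding k4s_at_def by simp
  ultimately show ?thesis
    using k4s_at_subset_nbhd[OF S] by (metis card_mono)
qed

lemma quad_minor_sum_at_leaf:
  assumes G: "graph_on V E" and N: "nbhd E v = {a}"
  shows "int (card E) - int (deg E a) \<le> quad_minor_sum_at V E v"
proof -
  define g where "g f = {v, a} \<union> f" for f
  have va: "{v, a} \<in> E"
    using N unfolding nbhd_def by auto
  have no_edge: "{v, y} \<notin> E" if "y \<noteq> a" for y
    using N that unfolding nbhd_def by auto
  have disj: "{v, a} \<inter> f = {}" if f: "f \<in> delete_vertex E a" for f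
  proof -
    have "f \<in> E" "a \<notin> f"
      using f unfolding delete_vertex_def by auto
    moreover have "v \<notin> f"
    proof
      assume "v \<in> f"
      then obtain y where "f = {v, y}"
        using graph_on_edgeE[OF G \<open>f \<in> E\<close>] by blast
      then show False
        using no_edge[of y] \<open>f \<in> E\<close> \<open>a \<notin> f\<close> by auto
    qed
    ultimately show ?thesis by auto
  qed
  have pendant: "g f \<in> {S. S \<subseteq> V \<and> card S = 4 \<and> v \<in> S}
      \<and> principal_minor (adj_ind E) (g f) = 1" if f: "f \<in> delete_vertex E a" for f
  proof -
    have "f \<in> E" "a \<notin> f"
      using f unfolding delete_vertex_def by auto
    have "{v, y} \<notin> E" if "y \<in> f" for y
      using no_edge that \<open>a \<notin> f\<close> by metis
    then have "principal_minor (adj_ind E) (g f) = 1"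
      unfolding g_def by (intro principal_minor_pendant[OF G va \<open>f \<in> E\<close> disj[OF f], of v]) auto
    then show ?thesis
      using card_Un_disjoint_edges[OF G va \<open>f \<in> E\<close> disj[OF f]] unfolding g_def by auto
  qed
  have "inj_on g (delete_vertex E a)"
    by (rule inj_on_inverseI[where g = "\<lambda>S. S - {v, a}"]) (use disj in \<open>auto simp: g_def\<close>)
  then have "card (g ` delete_vertex E a) = card E - deg E a"
    using card_delete_vertex[OF graph_on_finite_edges[OF G]] by (simp add: card_image)
  moreover have "k4s_at V E v = {}"
    using three_le_card_nbhd_if_k4[OF G] N by fastforce
  moreover have "deg E a \<le> card E"
    using deg_le_card[OF graph_on_finite_edges[OF G]] .
  ultimately show ?thesis
    using quad_minor_sum_at_ge_pendants[OF G, of "g ` delete_vertex E a" v] pendant by force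
qed

lemma k4s_at_deg_3:
  assumes N3: "card (nbhd E v) = 3" and S: "S \<in> k4s_at V E v"
  shows "S = insert v (nbhd E v)"
proof -
  have "card (S - {v}) = 3" "v \<in> S"
    using S unfolding k4s_at_def by auto
  moreover have "finite (nbhd E v)"
    using N3 by (simp add: card_ge_0_finite)
  ultimately have "S - {v} = nbhd E v"
    using k4s_at_subset_nbhd[OF S] N3 by (simp add: card_subset_eq)
  then show ?thesis
    using \<open>v \<in> S\<close> by blast
qed

lemma quad_minor_sum_at_ge_far_edge:
  assumes G: "graph_on V E" and f: "f \<in> E" "f \<inter> insert v (nbhd E v) = {}"
  shows "int (card (nbhd E v)) - 3 * int (card (k4s_at V E v)) \<le> quad_minor_sum_at V E v"
proof -
  let ?N = "nbhd E v"
  have pendant: "{v, u} \<union> f \<in> {S. S \<subseteq> V \<and> card S = 4 \<and> v \<in> S}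
      \<and> principal_minor (adj_ind E) ({v, u} \<union> f) = 1" if "u \<in> ?N" for u
  proof -
    have e: "{v, u} \<in> E" and disj: "{v, u} \<inter> f = {}"
      using f that unfolding nbhd_def by auto
    have "principal_minor (adj_ind E) ({v, u} \<union> f) = 1"
      using f unfolding nbhd_def by (intro principal_minor_pendant[OF G e f(1) disj, of v]) auto
    then show ?thesis
      using card_Un_disjoint_edges[OF G e f(1) disj] by auto
  qed
  have "inj_on (\<lambda>u. {v, u} \<union> f) ?N"
    by (rule inj_on_inverseI[where g = "\<lambda>S. the_elem (S - insert v f)"])
      (use f not_in_nbhd[OF G, of v] in \<open>auto simp: insert_Diff_if\<close>)
  then have "card ((\<lambda>u. {v, u} \<union> f) ` ?N) = card ?N"
    by (simp add: card_image)
  then show ?thesis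
    using quad_minor_sum_at_ge_pendants[OF G, of "(\<lambda>u. {v, u} \<union> f) ` ?N" v] pendant
    by force
qed

lemma nbhd_outside_closed_k4:
  assumes G: "graph_on V E" and N3: "card (nbhd E v) = 3"
    and meets: "\<And>f. f \<in> E \<Longrightarrow> f \<inter> insert v (nbhd E v) \<noteq> {}"
    and min3: "\<And>u. u \<in> V \<Longrightarrow> 3 \<le> deg E u" and w: "w \<in> V - insert v (nbhd E v)"
  shows "nbhd E w = nbhd E v"
proof (rule card_seteq)
  show "finite (nbhd E v)"
    using N3 by (simp add: card_ge_0_finite)
  show "nbhd E w \<subseteq> nbhd E v"
  proof
    fix u assume "u \<in> nbhd E w"
    then have "{w, u} \<in> E"
      unfolding nbhd_def by simp
    moreover have "u \<noteq> v"
      using w \<open>{w, u} \<in> E\<close> unfolding nbhd_def by (auto simp: insert_commute)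
    ultimately show "u \<in> nbhd E v"
      using meets[of "{w, u}"] w by auto
  qed
  show "card (nbhd E v) \<le> card (nbhd E w)"
    using min3[of w] w N3 deg_eq_card_nbhd[OF G] by simp
qed

text \<open>Every vertex outside the closed neighbourhood of v is adjacent to exactly the three
  neighbours of v, so there are at least 6 + 3 (n - 4) edges.\<close>

lemma card_edges_closed_k4:
  assumes G: "graph_on V E" and v: "v \<in> V" and N3: "card (nbhd E v) = 3"
    and K: "clique E (insert v (nbhd E v))"
    and meets: "\<And>f. f \<in> E \<Longrightarrow> f \<inter> insert v (nbhd E v) \<noteq> {}"
    and min3: "\<And>u. u \<in> V \<Longrightarrow> 3 \<le> deg E u"
  shows "3 * card V \<le> card E + 6"
proof -
  let ?N = "nbhd E v"
  let ?K = "insert v ?N"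
  let ?W = "V - ?K"
  have V: "finite V" and finE: "finite E"
    using G graph_on_finite_edges unfolding graph_on_def by auto
  have KV: "?K \<subseteq> V" and finN: "finite ?N"
    using v nbhd_subset[OF G] N3 by (auto simp: card_ge_0_finite)
  have cK: "card ?K = 4"
    using N3 not_in_nbhd[OF G] finN by simp
  have "6 = card {e. e \<subseteq> ?K \<and> card e = 2}"
    using n_subsets[of ?K 2] cK finN by (simp add: choose_two)
  also have "\<dots> \<le> card {e\<in>E. e \<subseteq> ?K}"
    using K finE unfolding clique_def by (intro card_mono) (auto simp: card_2_iff)
  finally have in_K: "6 \<le> card {e\<in>E. e \<subseteq> ?K}" .
  have "inj_on (\<lambda>(w, u). {w, u}) (?W \<times> ?N)"
    by (auto simp: inj_on_def doubleton_eq_iff)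
  moreover have "(\<lambda>(w, u). {w, u}) ` (?W \<times> ?N) \<subseteq> {e\<in>E. \<not> e \<subseteq> ?K}"
    using nbhd_outside_closed_k4[OF G N3 meets min3] unfolding nbhd_def by auto
  ultimately have "card (?W \<times> ?N) \<le> card {e\<in>E. \<not> e \<subseteq> ?K}"
    using finE by (intro card_inj_on_le) auto
  then have out_K: "3 * (card V - 4) \<le> card {e\<in>E. \<not> e \<subseteq> ?K}"
    using N3 card_Diff_subset[OF _ KV] cK finN by (simp add: card_cartesian_product)
  have "card E = card {e\<in>E. e \<subseteq> ?K} + card {e\<in>E. \<not> e \<subseteq> ?K}"
    using finE by (subst card_Un_disjoint[symmetric]) (auto intro: arg_cong[where f = card])
  moreover have "4 \<le> card V"
    using cK KV V by (metis card_mono)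
  ultimately show ?thesis
    using in_K out_K by linarith
qed

lemma quad_minor_sum_at_deg_3_nonneg:
  assumes G: "graph_on V E" and v: "v \<in> V" and N3: "card (nbhd E v) = 3"
    and min3: "\<And>u. u \<in> V \<Longrightarrow> 3 \<le> deg E u" and sparse: "card E + 4 \<le> 2 * card V"
  shows "0 \<le> quad_minor_sum_at V E v"
proof -
  let ?K = "insert v (nbhd E v)"
  have "k4s_at V E v \<subseteq> {?K}"
    using k4s_at_deg_3[OF N3] by blast
  then have k4s: "card (k4s_at V E v) \<le> 1"
    using card_mono[of "{?K}"] by fastforce
  consider (far_edge) f where "f \<in> E" "f \<inter> ?K = {}"
    | (closed) "clique E ?K" "\<And>f. f \<in> E \<Longrightarrow> f \<inter> ?K \<noteq> {}"
    | (no_k4) "\<not> clique E ?K"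
    by blast
  then show ?thesis
  proof cases
    case far_edge
    then show ?thesis
      using quad_minor_sum_at_ge_far_edge[OF G far_edge] N3 k4s by simp
  next
    case closed
    have "?K \<subseteq> V" "card ?K = 4"
      using v nbhd_subset[OF G] N3 not_in_nbhd[OF G, of v] by (auto simp: card_ge_0_finite)
    then have "4 \<le> card V"
      using G card_mono unfolding graph_on_def by metis
    then show ?thesis
      using card_edges_closed_k4[OF G v N3 closed min3] sparse by linarith
  next
    case no_k4
    have "k4s_at V E v = {}"
      using k4s_at_deg_3[OF N3] no_k4 unfolding k4s_at_def by auto
    then show ?thesis
      using quad_minor_sum_at_ge_pendants[OF G, of "{}" v] by simp
  qed
qed

lemma quad_minor_sum_at_ge:
  assumes G: "graph_on V E" and v: "v \<in> V" and d1: "1 \<le> deg E v"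
  shows "- ((int (deg E v) - 2) * (int (card E) - int (max_deg V E))) \<le> quad_minor_sum_at V E v"
proof (cases "deg E v = 1")
  case True
  then obtain a where a: "nbhd E v = {a}"
    using deg_eq_card_nbhd[OF G] by (auto simp: card_1_singleton_iff)
  have "deg E a \<le> max_deg V E"
    using a nbhd_subset[OF G, of v] G by (intro max_deg_ge) (auto simp: graph_on_def)
  then show ?thesis
    using quad_minor_sum_at_leaf[OF G a] True by simp
next
  case False
  then have d2: "2 \<le> deg E v"
    using d1 by simp
  have "finite V" "V \<noteq> {}"
    using G v by (auto simp: graph_on_def)
  then obtain u where "deg E u = max_deg V E"
    using max_deg_attained by metis
  then have "card {e\<in>E. e \<subseteq> nbhd E v} \<le> card E - max_deg V E"
    using card_edges_in_nbhd_le[OF G, of v u] by simp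
  then have "3 * card (k4s_at V E v) \<le> (deg E v - 2) * (card E - max_deg V E)"
    using card_k4s_at_le[OF G, of v] deg_eq_card_nbhd[OF G, of v]
    by (metis mult_le_mono2 order_trans)
  then have "int (3 * card (k4s_at V E v)) \<le> int ((deg E v - 2) * (card E - max_deg V E))"
    by (simp only: of_nat_le_iff)
  then have "3 * int (card (k4s_at V E v))
      \<le> (int (deg E v) - 2) * (int (card E) - int (max_deg V E))"
    using d2 max_deg_le_card[OF G] by (simp add: of_nat_diff)
  then show ?thesis
    using quad_minor_sum_at_ge_pendants[OF G, of "{}" v] by simp
qed

lemma quad_minor_sum_at_nonneg:
  assumes G: "graph_on V E" and v: "v \<in> V" and d1: "1 \<le> deg E v"
    and min: "\<And>u. u \<in> V \<Longrightarrow> deg E v \<le> deg E u"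
    and sparse: "int (card E) - 2 * int (card V) + 4 < int (deg E v) - 2"
  shows "0 \<le> quad_minor_sum_at V E v"
proof -
  have V: "finite V"
    using G unfolding graph_on_def by simp
  have "nbhd E v \<subset> V"
    using nbhd_subset[OF G] not_in_nbhd[OF G] v by blast
  then have d_lt_n: "deg E v < card V"
    using deg_eq_card_nbhd[OF G] V by (simp add: psubset_card_mono)
  have "card V * deg E v \<le> 2 * card E"
    using sum_bounded_below[of V "deg E v" "deg E"] min handshake[OF G] by simp
  then have nd: "int (card V) * int (deg E v) \<le> 2 * int (card E)"
    by (metis of_nat_le_iff of_nat_mult of_nat_numeral)
  have "deg E v \<le> 3"
  proof (rule ccontr)
    assume "\<not> deg E v \<le> 3"
    then have "0 \<le> (int (card V) - 2) * (int (deg E v) - 4)"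
      using d_lt_n by simp
    then show False
      using nd sparse by (simp add: algebra_simps)
  qed
  then consider "deg E v \<le> 2" | "deg E v = 3"
    by linarith
  then show ?thesis
  proof cases
    case 1
    have "(int (deg E v) - 2) * (int (card E) - int (max_deg V E)) \<le> 0"
      using 1 max_deg_le_card[OF G] by (intro mult_nonpos_nonneg) auto
    then show ?thesis
      using quad_minor_sum_at_ge[OF G v d1] by linarith
  next
    case 2
    have "card (nbhd E v) = 3"
      using 2 deg_eq_card_nbhd[OF G] by simp
    moreover have "\<And>u. u \<in> V \<Longrightarrow> 3 \<le> deg E u"
      using min 2 by force
    moreover have "card E + 4 \<le> 2 * card V"
      using sparse 2 by simp
    ultimately show ?thesis
      by (rule quad_minor_sum_at_deg_3_nonneg[OF G v])
  qed
qed

section \<open>Deleting a vertex\<close>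

text \<open>Deleting a vertex of degree d lowers m - 2n + 4 by d - 2, which pays for the loss
  -(d - 2)(m - \<Delta>) at that vertex.\<close>

definition deficit :: "nat set \<Rightarrow> nat set set \<Rightarrow> int" where
  "deficit V E = max 0 (int (card E) - 2 * int (card V) + 4) * (int (card E) - int (max_deg V E))"

lemma deficit_nonneg: "graph_on V E \<Longrightarrow> 0 \<le> deficit V E"
  unfolding deficit_def using max_deg_le_card by simp

lemma quad_minor_sum_ge_deficit_delete_vertex:
  assumes G: "graph_on V E" and v: "v \<in> V" and d1: "1 \<le> deg E v"
    and min: "\<And>u. u \<in> V \<Longrightarrow> deg E v \<le> deg E u"
    and IH: "- deficit (V - {v}) (delete_vertex E v) \<le> quad_minor_sum (V - {v}) (delete_vertex E v)"
  shows "- deficit V E \<le> quad_minor_sum V E"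
proof -
  let ?V' = "V - {v}" and ?E' = "delete_vertex E v"
  define d m n where "d = int (deg E v)" and "m = int (card E)" and "n = int (card V)"
  define ex where "ex = m - 2 * n + 4"
  define K K' where "K = m - int (max_deg V E)"
    and "K' = int (card ?E') - int (max_deg ?V' ?E')"
  have finE: "finite E"
    using graph_on_finite_edges[OF G] .
  have card_E': "int (card ?E') = m - d"
    using card_delete_vertex[OF finE] deg_le_card[OF finE] by (simp add: m_def d_def of_nat_diff)
  have card_V': "int (card ?V') = n - 1"
    using v G card_gt_0_iff[of V] by (auto simp: n_def graph_on_def of_nat_diff)
  have "0 \<le> K'"
    using max_deg_le_card[OF graph_on_delete_vertex[OF G]] by (simp add: K'_def)
  have "K' \<le> K"
    using max_deg_delete_vertex[OF G v d1] card_E' unfolding K_def K'_def d_def by linarith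
  have deficit: "deficit V E = max 0 ex * K"
    unfolding deficit_def ex_def K_def m_def n_def ..
  have deficit': "deficit ?V' ?E' = max 0 (ex - (d - 2)) * K'"
    unfolding deficit_def K'_def card_E' card_V' ex_def by (simp add: algebra_simps)
  have split: "quad_minor_sum V E = quad_minor_sum ?V' ?E' + quad_minor_sum_at V E v"
    by (rule quad_minor_sum_delete_vertex[OF G])
  show ?thesis
  proof (cases "d - 2 \<le> ex")
    case True
    have "(ex - (d - 2)) * K' \<le> (ex - (d - 2)) * K"
      using True \<open>K' \<le> K\<close> by (intro mult_left_mono) auto
    moreover have "- ((d - 2) * K) \<le> quad_minor_sum_at V E v"
      using quad_minor_sum_at_ge[OF G v d1] unfolding d_def K_def m_def .
    moreover have "ex * K \<le> max 0 ex * K"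
      using \<open>0 \<le> K'\<close> \<open>K' \<le> K\<close> by (intro mult_right_mono) auto
    ultimately show ?thesis
      using IH True unfolding split deficit deficit' by (simp add: algebra_simps)
  next
    case False
    then have "deficit ?V' ?E' = 0"
      unfolding deficit' by simp
    moreover have "0 \<le> quad_minor_sum_at V E v"
      using quad_minor_sum_at_nonneg[OF G v d1 min] False unfolding ex_def m_def n_def d_def by simp
    ultimately show ?thesis
      using IH split deficit_nonneg[OF G] by linarith
  qed
qed

section \<open>One-point unions\<close>

lemma graph_on_Un: "graph_on V1 E1 \<Longrightarrow> graph_on V2 E2 \<Longrightarrow> graph_on (V1 \<union> V2) (E1 \<union> E2)"
  unfolding graph_on_def by auto

lemma edge_in_one_point_union:
  assumes U: "V1 \<inter> V2 = {x}" and G2: "graph_on V2 E2"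
    and "{i, j} \<in> E1 \<union> E2" "i \<in> V1" "j \<in> V1"
  shows "{i, j} \<in> E1"
proof (rule ccontr)
  assume "{i, j} \<notin> E1"
  then have "{i, j} \<subseteq> V2" "card {i, j} = 2"
    using assms(3) G2 unfolding graph_on_def by auto
  moreover have "i = x" "j = x"
    using U assms(4,5) calculation(1) by auto
  ultimately show False
    by simp
qed

lemma one_point_union_disjoint_edges:
  assumes "V1 \<inter> V2 = {x}" "graph_on V1 E1" "graph_on V2 E2"
  shows "E1 \<inter> E2 = {}"
proof -
  have "e \<notin> E2" if "e \<in> E1" for e
  proof
    assume "e \<in> E2"
    then have "e \<subseteq> {x}" "card e = 2"
      using that assms unfolding graph_on_def by blast+
    then show False
      using card_mono[of "{x}" e] by simp
  qed
  then show ?thesis by blast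
qed

lemma card_one_point_union:
  assumes U: "V1 \<inter> V2 = {x}" and G1: "graph_on V1 E1" and G2: "graph_on V2 E2"
  shows "card (E1 \<union> E2) = card E1 + card E2" and "card (V1 \<union> V2) + 1 = card V1 + card V2"
proof -
  show "card (E1 \<union> E2) = card E1 + card E2"
    using one_point_union_disjoint_edges[OF U G1 G2] graph_on_finite_edges[OF G1]
      graph_on_finite_edges[OF G2] by (simp add: card_Un_disjoint)
  show "card (V1 \<union> V2) + 1 = card V1 + card V2"
    using card_Un_Int[of V1 V2] U G1 G2 unfolding graph_on_def by simp
qed

lemma one_point_union_no_cross_edge:
  assumes "V1 \<inter> V2 = {x}" "graph_on V1 E1" "graph_on V2 E2"
    and "p \<in> V1 - {x}" "q \<in> V2 - {x}"
  shows "{p, q} \<notin> E1 \<union> E2"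
proof
  assume "{p, q} \<in> E1 \<union> E2"
  then have "q \<in> V1 \<or> p \<in> V2"
    using assms(2,3) unfolding graph_on_def by auto
  then show False
    using assms(1,4,5) by auto
qed

definition cross_quads :: "nat set \<Rightarrow> nat set \<Rightarrow> nat set set" where
  "cross_quads V1 V2 = {S. S \<subseteq> V1 \<union> V2 \<and> card S = 4 \<and> \<not> S \<subseteq> V1 \<and> \<not> S \<subseteq> V2}"

lemma quad_minor_sum_one_point_union:
  assumes U: "V1 \<inter> V2 = {x}" and G1: "graph_on V1 E1" and G2: "graph_on V2 E2"
  shows "quad_minor_sum (V1 \<union> V2) (E1 \<union> E2) = quad_minor_sum V1 E1 + quad_minor_sum V2 E2
    + (\<Sum>S\<in>cross_quads V1 V2. principal_minor (adj_ind (E1 \<union> E2)) S)"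
proof -
  let ?pm = "principal_minor (adj_ind (E1 \<union> E2))"
  let ?A1 = "{S. S \<subseteq> V1 \<and> card S = 4}" and ?A2 = "{S. S \<subseteq> V2 \<and> card S = 4}"
  have fin: "finite V1" "finite V2"
    using G1 G2 unfolding graph_on_def by auto
  have "S \<notin> ?A2" if "S \<in> ?A1" for S
  proof
    assume "S \<in> ?A2"
    then have "S \<subseteq> {x}" "card S = 4"
      using that U by auto
    then show False
      using card_mono[of "{x}" S] by simp
  qed
  then have "?A1 \<inter> ?A2 = {}"
    by blast
  moreover have "{S. S \<subseteq> V1 \<union> V2 \<and> card S = 4} = (?A1 \<union> ?A2) \<union> cross_quads V1 V2"
    "(?A1 \<union> ?A2) \<inter> cross_quads V1 V2 = {}"
    unfolding cross_quads_def by auto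
  ultimately have "quad_minor_sum (V1 \<union> V2) (E1 \<union> E2) =
      sum ?pm ?A1 + sum ?pm ?A2 + sum ?pm (cross_quads V1 V2)"
    unfolding quad_minor_sum_def using fin
    by (simp add: sum.union_disjoint cross_quads_def)
  moreover have "sum ?pm ?A1 = quad_minor_sum V1 E1"
    unfolding quad_minor_sum_def using edge_in_one_point_union[OF U G2]
    by (intro sum.cong refl principal_minor_cong) (auto simp: adj_ind_def)
  moreover have "sum ?pm ?A2 = quad_minor_sum V2 E2"
    unfolding quad_minor_sum_def
    using edge_in_one_point_union[of V2 V1 x E1 _ _ E2] U G1
    by (intro sum.cong refl principal_minor_cong) (auto simp: adj_ind_def Int_commute Un_commute)
  ultimately show ?thesis by simp
qed

lemma eq_if_Diff_singleton_eq:
  assumes "card e = card f" "finite e" "e - {x} = f - {x}"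
  shows "e = f"
  using assms card_gt_0_iff[of e] card_gt_0_iff[of f]
  by (cases "x \<in> e"; cases "x \<in> f") (auto simp: card_Diff_singleton_if)

lemma principal_minor_cross_edges:
  assumes U: "V1 \<inter> V2 = {x}" and G1: "graph_on V1 E1" and G2: "graph_on V2 E2"
    and e1: "e1 \<in> E1" and e2: "e2 \<in> E2" and disj: "e1 \<inter> e2 = {}" and "x \<notin> e2"
  shows "principal_minor (adj_ind (E1 \<union> E2)) (e1 \<union> e2) = 1"
proof -
  obtain a b where "e1 = {a, b}" "a \<noteq> b"
    using G1 e1 unfolding graph_on_def by (auto simp: card_2_iff)
  then obtain q where q: "q \<in> e1" "q \<noteq> x"
    by blast
  then have "q \<in> V1 - {x}"
    using G1 e1 unfolding graph_on_def by auto
  moreover have "e2 \<subseteq> V2 - {x}"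
    using G2 e2 \<open>x \<notin> e2\<close> unfolding graph_on_def by auto
  ultimately have "{q, y} \<notin> E1 \<union> E2" if "y \<in> e2" for y
    using one_point_union_no_cross_edge[OF U G1 G2] that by blast
  then show ?thesis
    using e1 e2 by (intro principal_minor_pendant[OF graph_on_Un[OF G1 G2] _ _ disj q(1)]) auto
qed

definition disjoint_edge_pairs :: "nat set set \<Rightarrow> nat set set \<Rightarrow> (nat set \<times> nat set) set" where
  "disjoint_edge_pairs E1 E2 = {(e1, e2). e1 \<in> E1 \<and> e2 \<in> E2 \<and> e1 \<inter> e2 = {}}"

lemma card_disjoint_edge_pairs:
  assumes U: "V1 \<inter> V2 = {x}" and G1: "graph_on V1 E1" and G2: "graph_on V2 E2"
  shows "card (disjoint_edge_pairs E1 E2) = card E1 * card E2 - deg E1 x * deg E2 x"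
proof -
  let ?P = "disjoint_edge_pairs E1 E2"
  let ?X1 = "{e\<in>E1. x \<in> e}" and ?X2 = "{e\<in>E2. x \<in> e}"
  have "e1 \<inter> e2 \<subseteq> {x}" if "e1 \<in> E1" "e2 \<in> E2" for e1 e2
    using G1 G2 that U unfolding graph_on_def by blast
  then have P: "E1 \<times> E2 = ?P \<union> ?X1 \<times> ?X2" "?P \<inter> ?X1 \<times> ?X2 = {}"
    unfolding disjoint_edge_pairs_def by blast+
  have "finite (E1 \<times> E2)"
    using graph_on_finite_edges[OF G1] graph_on_finite_edges[OF G2] by simp
  then have "card (E1 \<times> E2) = card ?P + card (?X1 \<times> ?X2)"
    unfolding P(1) by (intro card_Un_disjoint) (use P in \<open>auto intro: rev_finite_subset\<close>)
  then show ?thesis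
    unfolding deg_def by (simp add: card_cartesian_product)
qed

lemma inj_on_union_disjoint_edge_pairs:
  assumes U: "V1 \<inter> V2 = {x}" and G1: "graph_on V1 E1" and G2: "graph_on V2 E2"
  shows "inj_on (\<lambda>(e1, e2). e1 \<union> e2) (disjoint_edge_pairs E1 E2)"
proof (rule inj_onI, clarify)
  fix e1 e2 f1 f2
  assume "(e1, e2) \<in> disjoint_edge_pairs E1 E2" "(f1, f2) \<in> disjoint_edge_pairs E1 E2"
    and eq: "e1 \<union> e2 = f1 \<union> f2"
  then have e: "e1 \<in> E1" "e2 \<in> E2" "e1 \<inter> e2 = {}" and f: "f1 \<in> E1" "f2 \<in> E2" "f1 \<inter> f2 = {}"
    unfolding disjoint_edge_pairs_def by auto
  have E1: "\<And>e. e \<in> E1 \<Longrightarrow> e \<subseteq> V1 \<and> card e = 2" and E2: "\<And>e. e \<in> E2 \<Longrightarrow> e \<subseteq> V2 \<and> card e = 2"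
    using G1 G2 unfolding graph_on_def by auto
  have "e1 - {x} = (e1 \<union> e2) \<inter> (V1 - {x})" "f1 - {x} = (f1 \<union> f2) \<inter> (V1 - {x})"
    "e2 - {x} = (e1 \<union> e2) \<inter> (V2 - {x})" "f2 - {x} = (f1 \<union> f2) \<inter> (V2 - {x})"
    using e f E1 E2 U by blast+
  then show "e1 = f1 \<and> e2 = f2"
    using eq e f E1 E2 eq_if_Diff_singleton_eq[of _ _ x] by (metis card.infinite zero_neq_numeral)
qed

lemma union_disjoint_edge_pair_in_cross_quads:
  assumes U: "V1 \<inter> V2 = {x}" and G1: "graph_on V1 E1" and G2: "graph_on V2 E2"
    and "(e1, e2) \<in> disjoint_edge_pairs E1 E2"
  shows "e1 \<union> e2 \<in> cross_quads V1 V2"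
proof -
  have e: "e1 \<in> E1" "e2 \<in> E2" "e1 \<inter> e2 = {}"
    using assms(4) unfolding disjoint_edge_pairs_def by auto
  have E: "e1 \<subseteq> V1" "card e1 = 2" "e2 \<subseteq> V2" "card e2 = 2"
    using G1 G2 e unfolding graph_on_def by auto
  then obtain q1 q2 where "q1 \<in> e1" "q1 \<noteq> x" "q2 \<in> e2" "q2 \<noteq> x"
    by (metis card_2_iff insertCI)
  then have "q1 \<notin> V2" "q2 \<notin> V1"
    using E U by auto
  then show ?thesis
    unfolding cross_quads_def
    using card_Un_disjoint_edges[OF graph_on_Un[OF G1 G2] _ _ e(3)] e \<open>q1 \<in> e1\<close> \<open>q2 \<in> e2\<close>
    by blast
qed

lemma not_clique_cross_quads:
  assumes U: "V1 \<inter> V2 = {x}" and G1: "graph_on V1 E1" and G2: "graph_on V2 E2"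
    and S: "S \<in> cross_quads V1 V2"
  shows "\<not> clique (E1 \<union> E2) S"
proof
  assume "clique (E1 \<union> E2) S"
  obtain p q where "p \<in> S" "p \<notin> V2" "q \<in> S" "q \<notin> V1"
    using S unfolding cross_quads_def by blast
  moreover have p: "p \<in> V1 - {x}" and q: "q \<in> V2 - {x}"
    using S calculation U unfolding cross_quads_def by auto
  ultimately have "{p, q} \<in> E1 \<union> E2"
    using \<open>clique (E1 \<union> E2) S\<close> unfolding clique_def by auto
  then show False
    using one_point_union_no_cross_edge[OF U G1 G2 p q] by contradiction
qed

lemma cross_quads_sum_ge:
  assumes U: "V1 \<inter> V2 = {x}" and G1: "graph_on V1 E1" and G2: "graph_on V2 E2"
  shows "int (card E1 * card E2 - deg E1 x * deg E2 x)
    \<le> (\<Sum>S\<in>cross_quads V1 V2. principal_minor (adj_ind (E1 \<union> E2)) S)"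
proof -
  let ?u = "\<lambda>(e1, e2). e1 \<union> e2"
  have "principal_minor (adj_ind (E1 \<union> E2)) (e1 \<union> e2) = 1"
    if "(e1, e2) \<in> disjoint_edge_pairs E1 E2" for e1 e2
  proof (cases "x \<in> e2")
    case True
    have "e1 \<in> E1" "e2 \<in> E2" "e1 \<inter> e2 = {}"
      using that unfolding disjoint_edge_pairs_def by auto
    with True have "principal_minor (adj_ind (E2 \<union> E1)) (e2 \<union> e1) = 1"
      using U by (intro principal_minor_cross_edges[OF _ G2 G1]) auto
    then show ?thesis
      by (simp add: Un_commute)
  qed (use that principal_minor_cross_edges[OF U G1 G2] in \<open>auto simp: disjoint_edge_pairs_def\<close>)
  then have "int (card (?u ` disjoint_edge_pairs E1 E2))
      \<le> (\<Sum>S\<in>cross_quads V1 V2. principal_minor (adj_ind (E1 \<union> E2)) S)"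
  proof (intro int_card_le_sum)
    show "finite (cross_quads V1 V2)"
      using G1 G2 unfolding cross_quads_def graph_on_def by simp
    show "?u ` disjoint_edge_pairs E1 E2 \<subseteq> cross_quads V1 V2"
      using union_disjoint_edge_pair_in_cross_quads[OF U G1 G2] by auto
    show "0 \<le> principal_minor (adj_ind (E1 \<union> E2)) S"
      if "S \<in> cross_quads V1 V2 - ?u ` disjoint_edge_pairs E1 E2" for S
      using that not_clique_cross_quads[OF U G1 G2] graph_on_loopless[OF graph_on_Un[OF G1 G2]]
      by (intro principal_minor_4_bounds(2)) (auto simp: cross_quads_def)
  qed auto
  then show ?thesis
    using card_disjoint_edge_pairs[OF U G1 G2] inj_on_union_disjoint_edge_pairs[OF U G1 G2]
    by (simp add: card_image)
qed

lemma deg_Un_le: "deg (E1 \<union> E2) u \<le> deg E1 u + deg E2 u"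
proof -
  have "{e\<in>E1 \<union> E2. u \<in> e} = {e\<in>E1. u \<in> e} \<union> {e\<in>E2. u \<in> e}"
    by auto
  then show ?thesis
    unfolding deg_def by (metis card_Un_le)
qed

lemma deg_le_max_deg: "graph_on V E \<Longrightarrow> deg E u \<le> max_deg V E"
  using max_deg_ge deg_outside unfolding graph_on_def by (metis le0)

lemma max_deg_Un_le:
  assumes G1: "graph_on V1 E1" and G2: "graph_on V2 E2"
  shows "max_deg (V1 \<union> V2) (E1 \<union> E2) \<le> max_deg V1 E1 + max_deg V2 E2"
proof -
  have "deg (E1 \<union> E2) u \<le> max_deg V1 E1 + max_deg V2 E2" for u
    using deg_Un_le[of E1 E2 u] deg_le_max_deg[OF G1, of u] deg_le_max_deg[OF G2, of u] by linarith
  then show ?thesis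
    using G1 G2 unfolding max_deg_def graph_on_def by (simp add: Max_le_iff)
qed

lemma one_point_union_arith:
  fixes F1 F2 X K K1 K2 m1 m2 ex1 ex2 :: int
  assumes F1: "- (max 0 ex1 * K1) \<le> F1" and F2: "- (max 0 ex2 * K2) \<le> F2"
    and K: "0 \<le> K1" "0 \<le> K2" "K1 + K2 \<le> K"
    and X: "m2 * K1 \<le> X" "m1 * K2 \<le> X" "K1 + K2 \<le> X"
    and ex: "2 \<le> m1 + ex1" "2 \<le> m2 + ex2"
  shows "- (max 0 (ex1 + ex2 - 2) * K) \<le> F1 + F2 + X"
proof -
  define t where "t = max 0 (ex1 + ex2 - 2)"
  have "t * (K1 + K2) \<le> t * K"
    using K by (intro mult_left_mono) (auto simp: t_def)
  moreover have "0 \<le> t * K1" "0 \<le> t * K2"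
    using K by (auto simp: t_def)
  moreover have "max 0 ex1 * K1 + max 0 ex2 * K2 \<le> t * K1 + t * K2 + X"
  proof (cases "0 < ex1"; cases "0 < ex2")
    assume "0 < ex1" "0 < ex2"
    then have "max 0 ex1 * K1 \<le> (t + 1) * K1" "max 0 ex2 * K2 \<le> (t + 1) * K2"
      using K by (auto simp: t_def intro!: mult_right_mono)
    then show ?thesis
      using X by (simp add: algebra_simps)
  next
    assume "0 < ex1" "\<not> 0 < ex2"
    then have "max 0 ex1 * K1 \<le> (t + m2) * K1"
      using K ex by (auto simp: t_def intro!: mult_right_mono)
    then show ?thesis
      using X \<open>\<not> 0 < ex2\<close> \<open>0 \<le> t * K2\<close> by (simp add: algebra_simps)
  next
    assume "\<not> 0 < ex1" "0 < ex2"
    then have "max 0 ex2 * K2 \<le> (t + m1) * K2"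
      using K ex by (auto simp: t_def intro!: mult_right_mono)
    then show ?thesis
      using X \<open>\<not> 0 < ex1\<close> \<open>0 \<le> t * K1\<close> by (simp add: algebra_simps)
  next
    assume "\<not> 0 < ex1" "\<not> 0 < ex2"
    then show ?thesis
      using X K \<open>0 \<le> t * K1\<close> \<open>0 \<le> t * K2\<close> by simp
  qed
  ultimately show ?thesis
    using F1 F2 unfolding t_def by (simp add: algebra_simps)
qed

lemma cross_quads_sum_ge_bounds:
  assumes U: "V1 \<inter> V2 = {x}" and G1: "graph_on V1 E1" and G2: "graph_on V2 E2"
    and d1: "1 \<le> deg E1 x" and d2: "1 \<le> deg E2 x"
  defines "X \<equiv> \<Sum>S\<in>cross_quads V1 V2. principal_minor (adj_ind (E1 \<union> E2)) S"
    and "K1 \<equiv> int (card E1) - int (max_deg V1 E1)" and "K2 \<equiv> int (card E2) - int (max_deg V2 E2)"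
  shows "int (card E2) * K1 \<le> X" and "int (card E1) * K2 \<le> X" and "K1 + K2 \<le> X"
proof -
  define m1 m2 \<Delta>1 \<Delta>2 where "m1 = int (card E1)" and "m2 = int (card E2)"
    and "\<Delta>1 = int (max_deg V1 E1)" and "\<Delta>2 = int (max_deg V2 E2)"
  have deg_x: "int (deg E1 x) \<le> \<Delta>1" "\<Delta>1 \<le> m1" "int (deg E2 x) \<le> \<Delta>2" "\<Delta>2 \<le> m2"
    using deg_le_max_deg[OF G1] deg_le_max_deg[OF G2] max_deg_le_card[OF G1] max_deg_le_card[OF G2]
    by (auto simp: \<Delta>1_def \<Delta>2_def m1_def m2_def)
  have "m1 * m2 - int (deg E1 x) * int (deg E2 x) \<le> X"
    using cross_quads_sum_ge[OF U G1 G2] deg_x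
      mult_mono[of "deg E1 x" "card E1" "deg E2 x" "card E2"]
    unfolding X_def m1_def m2_def by (simp add: of_nat_diff \<Delta>1_def \<Delta>2_def)
  moreover have "int (deg E1 x) * int (deg E2 x) \<le> \<Delta>1 * m2"
    "int (deg E1 x) * int (deg E2 x) \<le> m1 * \<Delta>2" "int (deg E1 x) * int (deg E2 x) \<le> \<Delta>1 * \<Delta>2"
    "m1 - \<Delta>1 \<le> (m1 - \<Delta>1) * m2" "m2 - \<Delta>2 \<le> \<Delta>1 * (m2 - \<Delta>2)"
    using deg_x d1 d2 by (auto intro!: mult_mono simp: mult_le_cancel_left1 mult_le_cancel_right1)
  ultimately show "int (card E2) * K1 \<le> X" "int (card E1) * K2 \<le> X" "K1 + K2 \<le> X"
    unfolding K1_def K2_def m1_def[symmetric] m2_def[symmetric] \<Delta>1_def[symmetric] \<Delta>2_def[symmetric]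
    by (simp_all add: algebra_simps)
qed

lemma quad_minor_sum_ge_deficit_one_point_union:
  assumes U: "V1 \<inter> V2 = {x}" and G1: "graph_on V1 E1" and G2: "graph_on V2 E2"
    and IH1: "- deficit V1 E1 \<le> quad_minor_sum V1 E1"
    and IH2: "- deficit V2 E2 \<le> quad_minor_sum V2 E2"
    and tree1: "card V1 \<le> card E1 + 1" and tree2: "card V2 \<le> card E2 + 1"
    and d1: "1 \<le> deg E1 x" and d2: "1 \<le> deg E2 x"
  shows "- deficit (V1 \<union> V2) (E1 \<union> E2) \<le> quad_minor_sum (V1 \<union> V2) (E1 \<union> E2)"
proof -
  define m1 m2 where "m1 = int (card E1)" and "m2 = int (card E2)"
  define K1 K2 where "K1 = m1 - int (max_deg V1 E1)" and "K2 = m2 - int (max_deg V2 E2)"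
  note card_E = card_one_point_union(1)[OF U G1 G2]
    and card_V = card_one_point_union(2)[OF U G1 G2]
  have "K1 + K2 \<le> int (card (E1 \<union> E2)) - int (max_deg (V1 \<union> V2) (E1 \<union> E2))"
    using max_deg_Un_le[OF G1 G2] card_E unfolding K1_def K2_def m1_def m2_def by linarith
  then have bound: "- (max 0 ((m1 - 2 * int (card V1) + 4) + (m2 - 2 * int (card V2) + 4) - 2)
      * (int (card (E1 \<union> E2)) - int (max_deg (V1 \<union> V2) (E1 \<union> E2))))
      \<le> quad_minor_sum V1 E1 + quad_minor_sum V2 E2
        + (\<Sum>S\<in>cross_quads V1 V2. principal_minor (adj_ind (E1 \<union> E2)) S)"
    using IH1 IH2 tree1 tree2 max_deg_le_card[OF G1] max_deg_le_card[OF G2]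
      cross_quads_sum_ge_bounds[OF U G1 G2 d1 d2]
    by (intro one_point_union_arith) (auto simp: deficit_def m1_def m2_def K1_def K2_def)
  have excess: "(m1 - 2 * int (card V1) + 4) + (m2 - 2 * int (card V2) + 4) - 2
      = int (card (E1 \<union> E2)) - 2 * int (card (V1 \<union> V2)) + 4"
    using card_E card_V unfolding m1_def m2_def by linarith
  show ?thesis
    using bound unfolding excess quad_minor_sum_one_point_union[OF U G1 G2] deficit_def
    by simp
qed

section \<open>Cut vertices and the induction\<close>

definition connected_on :: "nat set \<Rightarrow> nat set set \<Rightarrow> bool" where
  "connected_on V E \<longleftrightarrow> (\<forall>u\<in>V. \<forall>w\<in>V. (adjacent E)\<^sup>*\<^sup>* u w)"

definition edges_within :: "nat set set \<Rightarrow> nat set \<Rightarrow> nat set set" where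
  "edges_within E W = {e\<in>E. e \<subseteq> W}"

lemma graph_on_edges_within: "graph_on V E \<Longrightarrow> W \<subseteq> V \<Longrightarrow> graph_on W (edges_within E W)"
  unfolding graph_on_def edges_within_def by (auto intro: finite_subset)

lemma symp_adjacent: "symp (adjacent E)"
  unfolding adjacent_def by (rule sympI) (simp add: insert_commute)

lemma connected_onI_root:
  assumes "r \<in> V" and "\<And>u. u \<in> V \<Longrightarrow> (adjacent E)\<^sup>*\<^sup>* u r"
  shows "connected_on V E"
  unfolding connected_on_def
  using assms sympD[OF symp_rtranclp[OF symp_adjacent]] by (meson rtranclp_trans)

lemma one_le_deg_if_connected:
  assumes "connected_on V E" and "v \<in> V" "w \<in> V" "w \<noteq> v" and "finite E"
  shows "1 \<le> deg E v"
proof -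
  have "(adjacent E)\<^sup>*\<^sup>* v w"
    using assms unfolding connected_on_def by auto
  then obtain y where "adjacent E v y"
    using \<open>w \<noteq> v\<close> by (cases rule: converse_rtranclpE) auto
  then have "{e\<in>E. v \<in> e} \<noteq> {}"
    unfolding adjacent_def by auto
  then show ?thesis
    unfolding deg_def using \<open>finite E\<close> by (simp add: Suc_le_eq card_gt_0_iff)
qed

lemma walk_to_vertex_within:
  assumes walk: "(adjacent E)\<^sup>*\<^sup>* y v" and "y \<in> W"
    and closed: "\<And>y z. y \<in> W - {v} \<Longrightarrow> {y, z} \<in> E \<Longrightarrow> z \<in> W"
  shows "(adjacent (edges_within E W))\<^sup>*\<^sup>* y v"
  using walk \<open>y \<in> W\<close>
proof (induction rule: converse_rtranclp_induct)
  case (step y z)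
  show ?case
  proof (cases "y = v")
    case False
    have "{y, z} \<in> E"
      using step.hyps(1) unfolding adjacent_def .
    then have "z \<in> W"
      using closed step.prems False by blast
    then have "adjacent (edges_within E W) y z"
      using \<open>{y, z} \<in> E\<close> step.prems unfolding adjacent_def edges_within_def by auto
    then show ?thesis
      using step.IH[OF \<open>z \<in> W\<close>] by (rule converse_rtranclp_into_rtranclp)
  qed simp
qed simp

lemma connected_on_edges_within:
  assumes conn: "connected_on V E" and "W \<subseteq> V" "v \<in> W"
    and closed: "\<And>y z. y \<in> W - {v} \<Longrightarrow> {y, z} \<in> E \<Longrightarrow> z \<in> W"
  shows "connected_on W (edges_within E W)"
proof (rule connected_onI_root[OF \<open>v \<in> W\<close>])
  fix u assume "u \<in> W"
  then have "(adjacent E)\<^sup>*\<^sup>* u v"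
    using conn assms(2,3) unfolding connected_on_def by auto
  then show "(adjacent (edges_within E W))\<^sup>*\<^sup>* u v"
    using walk_to_vertex_within closed \<open>u \<in> W\<close> by blast
qed

text \<open>The vertices reachable from a in G - v, together with v, and the remaining vertices
  form two blocks meeting only in the cut vertex v.\<close>

lemma cut_vertex_split:
  assumes G: "graph_on V E" and conn: "connected_on V E" and v: "v \<in> V"
    and not_conn: "\<not> connected_on (V - {v}) (delete_vertex E v)"
  obtains V1 V2 where "V1 \<union> V2 = V" "V1 \<inter> V2 = {v}" "V1 \<noteq> V" "V2 \<noteq> V"
    "E = edges_within E V1 \<union> edges_within E V2"
    "connected_on V1 (edges_within E V1)" "connected_on V2 (edges_within E V2)"
proof -
  obtain a b where ab: "a \<in> V - {v}" "b \<in> V - {v}" "\<not> (adjacent (delete_vertex E v))\<^sup>*\<^sup>* a b"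
    using not_conn unfolding connected_on_def by blast
  define C where "C = {u\<in>V - {v}. (adjacent (delete_vertex E v))\<^sup>*\<^sup>* a u}"
  have closure: "z \<in> insert v C" if "y \<in> C" "{y, z} \<in> E" for y z
  proof (cases "z = v")
    case False
    have "z \<in> V"
      using G that(2) unfolding graph_on_def by auto
    moreover have "adjacent (delete_vertex E v) y z"
      using that False unfolding C_def adjacent_def delete_vertex_def by auto
    ultimately show ?thesis
      using that(1) False unfolding C_def by auto
  qed simp
  have sym_closure: "y \<in> insert v C" if "z \<in> C" "{y, z} \<in> E" for y z
    using closure[of z y] that by (simp add: insert_commute)
  have "a \<in> C" "b \<notin> C" "v \<notin> C" "C \<subseteq> V"
    using ab unfolding C_def by auto
  have "E = edges_within E (insert v C) \<union> edges_within E (V - C)"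
  proof (intro equalityI subsetI)
    fix e assume "e \<in> E"
    then obtain p q where "e = {p, q}"
      using G unfolding graph_on_def by (metis card_2_iff)
    then show "e \<in> edges_within E (insert v C) \<union> edges_within E (V - C)"
      using \<open>e \<in> E\<close> closure sym_closure G unfolding edges_within_def graph_on_def by blast
  qed (auto simp: edges_within_def)
  moreover have "connected_on (insert v C) (edges_within E (insert v C))"
    using \<open>C \<subseteq> V\<close> v closure by (intro connected_on_edges_within[OF conn]) auto
  moreover have "connected_on (V - C) (edges_within E (V - C))"
  proof (rule connected_on_edges_within[OF conn])
    fix y z assume "y \<in> V - C - {v}" "{y, z} \<in> E"
    then show "z \<in> V - C"
      using sym_closure G unfolding graph_on_def by blast
  qed (use v \<open>v \<notin> C\<close> in auto)
  moreover have "insert v C \<noteq> V" "V - C \<noteq> V"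
    using ab \<open>a \<in> C\<close> \<open>b \<notin> C\<close> by auto
  ultimately show thesis
    using that[of "insert v C" "V - C"] \<open>C \<subseteq> V\<close> v \<open>v \<notin> C\<close> by auto
qed

lemma quad_minor_sum_ge_deficit_cut_vertex:
  assumes G: "graph_on V E" and conn: "connected_on V E" and v: "v \<in> V"
    and not_conn: "\<not> connected_on (V - {v}) (delete_vertex E v)"
    and IH: "\<And>V' E'. card V' < card V \<Longrightarrow> graph_on V' E' \<Longrightarrow> connected_on V' E' \<Longrightarrow>
      - deficit V' E' \<le> quad_minor_sum V' E' \<and> card V' \<le> card E' + 1"
  shows "- deficit V E \<le> quad_minor_sum V E \<and> card V \<le> card E + 1"
proof -
  obtain V1 V2 where V: "V1 \<union> V2 = V" "V1 \<inter> V2 = {v}" "V1 \<noteq> V" "V2 \<noteq> V"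
    and E: "E = edges_within E V1 \<union> edges_within E V2"
    and conn1: "connected_on V1 (edges_within E V1)"
    and conn2: "connected_on V2 (edges_within E V2)"
    using cut_vertex_split[OF G conn v not_conn] by blast
  have G1: "graph_on V1 (edges_within E V1)" and G2: "graph_on V2 (edges_within E V2)"
    using graph_on_edges_within[OF G] V by auto
  have "card V1 < card V" "card V2 < card V"
    using V G unfolding graph_on_def by (auto intro!: psubset_card_mono)
  then have IH1: "- deficit V1 (edges_within E V1) \<le> quad_minor_sum V1 (edges_within E V1)
      \<and> card V1 \<le> card (edges_within E V1) + 1"
    and IH2: "- deficit V2 (edges_within E V2) \<le> quad_minor_sum V2 (edges_within E V2)
      \<and> card V2 \<le> card (edges_within E V2) + 1"
    using IH G1 G2 conn1 conn2 by blast+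
  have "1 \<le> deg (edges_within E V1) v" "1 \<le> deg (edges_within E V2) v"
    using V one_le_deg_if_connected[OF conn1, of v] one_le_deg_if_connected[OF conn2, of v]
      graph_on_finite_edges[OF G1] graph_on_finite_edges[OF G2] by blast+
  then have "- deficit V E \<le> quad_minor_sum V E"
    using quad_minor_sum_ge_deficit_one_point_union[OF V(2) G1 G2] IH1 IH2 V(1) E by metis
  moreover have "card V \<le> card E + 1"
    using card_one_point_union[OF V(2) G1 G2] IH1 IH2 V(1) E by simp
  ultimately show ?thesis by simp
qed

theorem quad_minor_sum_ge_deficit:
  assumes "graph_on V E" and "connected_on V E"
  shows "- deficit V E \<le> quad_minor_sum V E \<and> card V \<le> card E + 1"
  using assms
proof (induction "card V" arbitrary: V E rule: less_induct)
  case less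
  note G = less.prems(1) and conn = less.prems(2)
  have V: "finite V" and finE: "finite E"
    using G graph_on_finite_edges unfolding graph_on_def by auto
  show ?case
  proof (cases "card V \<le> 1")
    case True
    have "\<not> (S \<subseteq> V \<and> card S = 4)" for S
      using card_mono[OF V, of S] True by auto
    then have no_quads: "{S. S \<subseteq> V \<and> card S = 4} = {}"
      by blast
    show ?thesis
      using True deficit_nonneg[OF G] unfolding quad_minor_sum_def no_quads by simp
  next
    case False
    then have "\<exists>x\<in>V. \<exists>y\<in>V. x \<noteq> y"
      using card_le_Suc0_iff_eq[OF V] by auto
    then obtain v where v: "v \<in> V" and min: "\<And>u. u \<in> V \<Longrightarrow> deg E v \<le> deg E u"
      using ex_has_least_nat[of "\<lambda>u. u \<in> V" _ "deg E"] by blast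
    obtain w where "w \<in> V" "w \<noteq> v"
      using \<open>\<exists>x\<in>V. \<exists>y\<in>V. x \<noteq> y\<close> by blast
    then have d1: "1 \<le> deg E v"
      using one_le_deg_if_connected[OF conn v _ _ finE] by blast
    show ?thesis
    proof (cases "connected_on (V - {v}) (delete_vertex E v)")
      case True
      have IH: "- deficit (V - {v}) (delete_vertex E v)
          \<le> quad_minor_sum (V - {v}) (delete_vertex E v)"
        and tree: "card (V - {v}) \<le> card (delete_vertex E v) + 1"
        using less.hyps[OF card_Diff1_less[OF V v] graph_on_delete_vertex[OF G] True] by auto
      have "card V = card (V - {v}) + 1"
        using card_Suc_Diff1[OF V v] by simp
      moreover have "card (delete_vertex E v) + 1 \<le> card E"
        using card_delete_vertex[OF finE, of v] deg_le_card[OF finE, of v] d1 by linarith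
      ultimately show ?thesis
        using quad_minor_sum_ge_deficit_delete_vertex[OF G v d1 min IH] tree by linarith
    next
      case False
      then show ?thesis
        using quad_minor_sum_ge_deficit_cut_vertex[OF G conn v] less.hyps by blast
    qed
  qed
qed

theorem theorem4p4:
  fixes n m :: nat and E :: "nat set set"
  assumes "n \<ge> 6"
    and "n - 1 \<le> m" and "m \<le> 2 * n - 4"
    and "simple_graph n E"
    and "connected_graph n E"
    and "card E = m"
  shows "a4 n E \<ge> 0"
proof -
  have G: "graph_on {0..<n} E"
    using assms(4) unfolding simple_graph_def graph_on_def by auto
  have conn: "connected_on {0..<n} E"
    using assms(5) unfolding connected_graph_def connected_on_def .
  have "deficit {0..<n} E = 0"
    using assms(1,3,6) unfolding deficit_def by simp
  then have "0 \<le> quad_minor_sum {0..<n} E"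
    using quad_minor_sum_ge_deficit[OF G conn] by simp
  then show ?thesis
    using a4_eq_quad_minor_sum[OF assms(4)] assms(1) by simp
qed

end
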